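(* Let $m\in\mathbb{N}$ and let $\lambda$ be a nonzero real number. For all integers $n,l\ge0$, \[ D_{m,\lambda}(n+l,x)=\sum_{j=0}^{l}\sum_{k=0}^{n}\binom{n}{k}W_{m,\lambda}(l,j)\,x^{j}\,(mj-l\lambda)_{n-k,\lambda}\,D_{m,\lambda}(k,x) \] as polynomials in $x$; equivalently, with $a^{+}$ the boson creation operator, \[ D_{m,\lambda}(n+l,m a^{+})=\sum_{j=0}^{l}\sum_{k=0}^{n}\binom{n}{k}W_{m,\lambda}(l,j)\,m^{j}(a^{+})^{j}(mj-l\lambda)_{n-k,\lambda}D_{m,\lambda}(k,m a^{+}). \]
   Context: $(x)_{0,\lambda}=1$ and $(x)_{n,\lambda}=x(x-\lambda)\cdots(x-(n-1)\lambda)$ for $n\ge1$; $(x)_k=x(x-1)\cdots(x-k+1)$. For $m\in\mathbb{N}$, the degenerate Whitney numbers of the second kind $W_{m,\lambda}(n,k)$ are defined by $(mx+1)_{n,\lambda}=\sum_{k=0}^{n}W_{m,\lambda}(n,k)m^{k}(x)_k$ ($n\ge0$), and the degenerate Dowling polynomials are $D_{m,\lambda}(n,x)=\sum_{k=0}^{n}W_{m,\lambda}(n,k)x^{k}$. *)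

theory Defs
  imports Complex_Main
begin

definition deg_ff :: "real \<Rightarrow> real \<Rightarrow> nat \<Rightarrow> real" where
  "deg_ff x lam n = (\<Prod>i<n. x - of_nat i * lam)"

definition falling_fact :: "real \<Rightarrow> nat \<Rightarrow> real" where
  "falling_fact x k = (\<Prod>i<k. x - of_nat i)"

definition deg_whitney2 :: "nat \<Rightarrow> real \<Rightarrow> nat \<Rightarrow> nat \<Rightarrow> real" where
  "deg_whitney2 m lam n =
     (THE c. (\<forall>x::real. deg_ff (of_nat m * x + 1) lam n
                 = (\<Sum>k\<le>n. c k * of_nat m ^ k * falling_fact x k))
            \<and> (\<forall>k>n. c k = 0))"

definition deg_dowling :: "nat \<Rightarrow> real \<Rightarrow> nat \<Rightarrow> real \<Rightarrow> real" where
  "deg_dowling m lam n x = (\<Sum>k\<le>n. deg_whitney2 m lam n k * x ^ k)"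

end

theory Submission
  imports Defs
begin

text \<open>
  Dobinski's formula \<open>e\<^sup>z D\<^sub>m\<^sub>,\<^sub>\<lambda>(n, m z) = \<Sum>\<^sub>i (m i + 1)\<^sub>n\<^sub>,\<^sub>\<lambda> z\<^sup>i / i!\<close> reduces the identity to one about
  the coefficients \<open>(m i + 1)\<^sub>n\<^sub>+\<^sub>l\<^sub>,\<^sub>\<lambda> = (m i + 1)\<^sub>l\<^sub>,\<^sub>\<lambda> (m i + 1 - l\<lambda>)\<^sub>n\<^sub>,\<^sub>\<lambda>\<close>. Expanding the first factor
  in the falling factorials \<open>(i)\<^sub>j\<close> and using \<open>\<Sum>\<^sub>i (i)\<^sub>j g(i) z\<^sup>i / i! = z\<^sup>j \<Sum>\<^sub>i g(i + j) z\<^sup>i / i!\<close> shifts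
  the argument of the second factor to \<open>m i + 1 + (m j - l\<lambda>)\<close>; the binomial theorem for degenerate
  falling factorials splits this into \<open>(m i + 1)\<^sub>k\<^sub>,\<^sub>\<lambda> (m j - l\<lambda>)\<^sub>n\<^sub>-\<^sub>k\<^sub>,\<^sub>\<lambda>\<close>, and Dobinski's formula
  turns the first factor back into \<open>D\<^sub>m\<^sub>,\<^sub>\<lambda>(k, m z)\<close>.
\<close>

lemma falling_fact_0 [simp]: "falling_fact x 0 = 1"
  by (simp add: falling_fact_def)

lemma falling_fact_Suc: "falling_fact x (Suc k) = falling_fact x k * (x - of_nat k)"
  by (simp add: falling_fact_def)

lemma falling_fact_Suc_plus_1: "falling_fact (x + 1) (Suc k) = (x + 1) * falling_fact x k"
  unfolding falling_fact_def prod.lessThan_Suc_shift by (simp add: algebra_simps)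

lemma falling_fact_of_nat_eq_0: "i < k \<Longrightarrow> falling_fact (of_nat i) k = 0"
  unfolding falling_fact_def by (rule prod_zero) auto

lemma falling_fact_of_nat_mult_fact: "falling_fact (of_nat (i + j)) j * fact i = fact (i + j)"
proof (induction j)
  case (Suc j)
  have "falling_fact (of_nat (i + Suc j)) (Suc j) = of_nat (i + Suc j) * falling_fact (of_nat (i + j)) j"
    using falling_fact_Suc_plus_1[of "of_nat (i + j)" j] by (simp add: add_ac)
  then show ?case
    using Suc by (simp add: fact_Suc)
qed simp

lemma falling_fact_coeffs_eq_0:
  assumes zero: "\<And>x. (\<Sum>k\<le>n. c k * falling_fact x k) = 0" and "k \<le> n"
  shows "c k = 0"
  using \<open>k \<le> n\<close>
proof (induction k rule: less_induct)
  case (less i)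
  have "(\<Sum>k\<in>{..n} - {i}. c k * falling_fact (of_nat i) k) = 0"
  proof (rule sum.neutral, intro ballI)
    fix k assume "k \<in> {..n} - {i}"
    then show "c k * falling_fact (of_nat i) k = 0"
      using less.IH[of k] falling_fact_of_nat_eq_0[of i k] by (cases "k < i") auto
  qed
  then have "(\<Sum>k\<le>n. c k * falling_fact (of_nat i) k) = c i * falling_fact (of_nat i) i"
    using less.prems by (simp add: sum.remove[of "{..n}" i])
  moreover have "falling_fact (of_nat i) i \<noteq> 0"
    using falling_fact_of_nat_mult_fact[of 0 i] by auto
  ultimately show ?case
    using zero[of "of_nat i"] by simp
qed

lemma deg_ff_0 [simp]: "deg_ff x lam 0 = 1"
  by (simp add: deg_ff_def)

lemma deg_ff_Suc: "deg_ff x lam (Suc k) = deg_ff x lam k * (x - of_nat k * lam)"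
  by (simp add: deg_ff_def)

lemma deg_ff_add: "deg_ff x lam (n + l) = deg_ff x lam l * deg_ff (x - of_nat l * lam) lam n"
  by (induction n) (auto simp: deg_ff_Suc algebra_simps)

lemma deg_ff_binomial:
  "deg_ff (a + b) lam n = (\<Sum>k\<le>n. of_nat (n choose k) * deg_ff a lam k * deg_ff b lam (n - k))"
proof (induction n)
  case (Suc n)
  let ?A = "deg_ff a lam" and ?B = "deg_ff b lam"
  have choose_split: "Suc n choose k = (if k = 0 then 0 else n choose (k - 1)) + (n choose k)" for k
    by (cases k) auto
  \<comment> \<open>Split the new factor as \<open>a + b - n\<lambda> = (a - k\<lambda>) + (b - (n - k)\<lambda>)\<close>.\<close>
  have "deg_ff (a + b) lam (Suc n)
      = (\<Sum>k\<le>n. of_nat (n choose k) * ?A (Suc k) * ?B (Suc n - Suc k))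
        + (\<Sum>k\<le>n. of_nat (n choose k) * ?A k * ?B (Suc n - k))"
    unfolding deg_ff_Suc[of "a + b"] Suc sum_distrib_right sum.distrib[symmetric]
  proof (rule sum.cong[OF refl])
    fix k assume "k \<in> {..n}"
    then have "Suc n - k = Suc (n - k)" and "of_nat (n - k) = (of_nat n - of_nat k :: real)"
      by (auto simp: of_nat_diff)
    then show "of_nat (n choose k) * ?A k * ?B (n - k) * (a + b - of_nat n * lam)
      = of_nat (n choose k) * ?A (Suc k) * ?B (Suc n - Suc k) + of_nat (n choose k) * ?A k * ?B (Suc n - k)"
      by (simp add: deg_ff_Suc algebra_simps)
  qed
  also have "(\<Sum>k\<le>n. of_nat (n choose k) * ?A (Suc k) * ?B (Suc n - Suc k))
     = (\<Sum>k\<le>Suc n. of_nat (if k = 0 then 0 else n choose (k - 1)) * ?A k * ?B (Suc n - k))"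
    by (subst sum.atMost_Suc_shift) simp
  also have "(\<Sum>k\<le>n. of_nat (n choose k) * ?A k * ?B (Suc n - k))
     = (\<Sum>k\<le>Suc n. of_nat (n choose k) * ?A k * ?B (Suc n - k))"
    by simp
  finally show ?case
    unfolding choose_split of_nat_add distrib_right sum.distrib .
qed simp

fun whitney_rec :: "nat \<Rightarrow> real \<Rightarrow> nat \<Rightarrow> nat \<Rightarrow> real" where
  "whitney_rec m lam 0 k = (if k = 0 then 1 else 0)"
| "whitney_rec m lam (Suc n) k = (if k = 0 then 0 else whitney_rec m lam n (k - 1))
      + (of_nat m * of_nat k + 1 - of_nat n * lam) * whitney_rec m lam n k"

lemma whitney_rec_eq_0: "n < k \<Longrightarrow> whitney_rec m lam n k = 0"
  by (induction n arbitrary: k) auto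

lemma deg_ff_whitney_rec_expansion:
  "deg_ff (of_nat m * x + 1) lam n
     = (\<Sum>k\<le>n. whitney_rec m lam n k * of_nat m ^ k * falling_fact x k)"
proof (induction n)
  case (Suc n)
  let ?W = "whitney_rec m lam n" and ?c = "\<lambda>k. of_nat m * of_nat k + 1 - of_nat n * lam"
  \<comment> \<open>\<open>m x + 1 - n\<lambda> = m (x - k) + (m k + 1 - n\<lambda>)\<close> raises \<open>(x)\<^sub>k\<close> to \<open>(x)\<^sub>k\<^sub>+\<^sub>1\<close>.\<close>
  have "deg_ff (of_nat m * x + 1) lam (Suc n)
      = (\<Sum>k\<le>n. ?W k * of_nat m ^ Suc k * falling_fact x (Suc k))
        + (\<Sum>k\<le>n. ?c k * ?W k * of_nat m ^ k * falling_fact x k)"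
    unfolding deg_ff_Suc Suc sum_distrib_right sum.distrib[symmetric]
    by (rule sum.cong) (auto simp: falling_fact_Suc algebra_simps)
  also have "(\<Sum>k\<le>n. ?W k * of_nat m ^ Suc k * falling_fact x (Suc k))
     = (\<Sum>k\<le>Suc n. (if k = 0 then 0 else ?W (k - 1)) * of_nat m ^ k * falling_fact x k)"
    by (subst sum.atMost_Suc_shift) simp
  also have "(\<Sum>k\<le>n. ?c k * ?W k * of_nat m ^ k * falling_fact x k)
     = (\<Sum>k\<le>Suc n. ?c k * ?W k * of_nat m ^ k * falling_fact x k)"
    by (simp add: whitney_rec_eq_0)
  finally show ?case
    by (simp add: sum.distrib[symmetric] algebra_simps del: whitney_rec.simps(1) sum.atMost_Suc)
qed (simp add: deg_ff_def)

lemma deg_whitney2_eq_whitney_rec: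
  assumes "m \<noteq> 0"
  shows "deg_whitney2 m lam n = whitney_rec m lam n"
  unfolding deg_whitney2_def
proof (rule the_equality)
  fix c
  assume c: "(\<forall>x. deg_ff (of_nat m * x + 1) lam n = (\<Sum>k\<le>n. c k * of_nat m ^ k * falling_fact x k))
    \<and> (\<forall>k>n. c k = 0)"
  have coeff_diff: "(c k - whitney_rec m lam n k) * of_nat m ^ k = 0" if "k \<le> n" for k
  proof (rule falling_fact_coeffs_eq_0[OF _ that])
    fix x
    have "(\<Sum>k\<le>n. c k * of_nat m ^ k * falling_fact x k)
        = (\<Sum>k\<le>n. whitney_rec m lam n k * of_nat m ^ k * falling_fact x k)"
      using c deg_ff_whitney_rec_expansion[of m x lam n] by metis
    then show "(\<Sum>k\<le>n. (c k - whitney_rec m lam n k) * of_nat m ^ k * falling_fact x k) = 0"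
      by (simp add: left_diff_distrib sum_subtractf)
  qed
  then show "c = whitney_rec m lam n"
  proof (intro ext)
    fix k
    show "c k = whitney_rec m lam n k"
    proof (cases "k \<le> n")
      case True
      then show ?thesis
        using coeff_diff assms by simp
    next
      case False
      then show ?thesis
        using c by (simp add: whitney_rec_eq_0)
    qed
  qed
qed (simp add: deg_ff_whitney_rec_expansion whitney_rec_eq_0)

lemma sums_falling_fact_mult:
  fixes z :: real
  assumes "(\<lambda>i. g (i + j) * z ^ i / fact i) sums s"
  shows "(\<lambda>i. falling_fact (of_nat i) j * g i * z ^ i / fact i) sums (z ^ j * s)"
proof -
  have "falling_fact (of_nat (i + j)) j * g (i + j) * z ^ (i + j) / fact (i + j)
      = z ^ j * (g (i + j) * z ^ i / fact i)" for i
  proof -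
    have "fact (i + j) = falling_fact (of_nat (i + j)) j * (fact i :: real)"
      using falling_fact_of_nat_mult_fact[of i j] by simp
    moreover have "falling_fact (of_nat (i + j)) j \<noteq> 0"
      using calculation fact_nonzero[of "i + j"] by (metis mult_eq_0_iff)
    ultimately show ?thesis
      by (simp add: power_add field_simps del: of_nat_add)
  qed
  then have "(\<lambda>i. falling_fact (of_nat (i + j)) j * g (i + j) * z ^ (i + j) / fact (i + j))
      sums (z ^ j * s)"
    using sums_mult[OF assms, of "z ^ j"] by simp
  then show ?thesis
    by (subst (asm) sums_zero_iff_shift) (auto simp: falling_fact_of_nat_eq_0)
qed

lemma sums_falling_fact_exp:
  fixes z :: real
  shows "(\<lambda>i. falling_fact (of_nat i) k * z ^ i / fact i) sums (z ^ k * exp z)"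
proof -
  have "(\<lambda>i. z ^ i / fact i) sums exp z"
    using exp_converges[of z] by (simp add: divide_inverse_commute scaleR_conv_of_real)
  then show ?thesis
    using sums_falling_fact_mult[of "\<lambda>_. 1" k z "exp z"] by simp
qed

lemma deg_dowling_dobinski:
  fixes z :: real
  assumes "m \<noteq> 0"
  shows "(\<lambda>i. deg_ff (of_nat m * of_nat i + 1) lam n * z ^ i / fact i)
           sums (exp z * deg_dowling m lam n (of_nat m * z))"
proof -
  have "(\<lambda>i. \<Sum>k\<le>n. whitney_rec m lam n k * of_nat m ^ k * (falling_fact (of_nat i) k * z ^ i / fact i))
      sums (\<Sum>k\<le>n. whitney_rec m lam n k * of_nat m ^ k * (z ^ k * exp z))"
    by (intro sums_sum sums_mult sums_falling_fact_exp)
  then show ?thesis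
    unfolding deg_dowling_def deg_whitney2_eq_whitney_rec[OF assms] deg_ff_whitney_rec_expansion
      sum_distrib_left sum_distrib_right sum_divide_distrib
    by (simp add: power_mult_distrib algebra_simps)
qed

lemma deg_dowling_dobinski_shift:
  fixes z :: real
  assumes "m \<noteq> 0"
  shows "(\<lambda>i. deg_ff (of_nat m * of_nat i + 1 + a) lam n * z ^ i / fact i)
           sums (\<Sum>k\<le>n. of_nat (n choose k) * deg_ff a lam (n - k)
                   * (exp z * deg_dowling m lam k (of_nat m * z)))"
proof -
  have "(\<lambda>i. \<Sum>k\<le>n. of_nat (n choose k) * deg_ff a lam (n - k)
          * (deg_ff (of_nat m * of_nat i + 1) lam k * z ^ i / fact i))
      sums (\<Sum>k\<le>n. of_nat (n choose k) * deg_ff a lam (n - k)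
          * (exp z * deg_dowling m lam k (of_nat m * z)))"
    by (intro sums_sum sums_mult deg_dowling_dobinski assms)
  moreover have "deg_ff (of_nat m * of_nat i + 1 + a) lam n * z ^ i / fact i
      = (\<Sum>k\<le>n. of_nat (n choose k) * deg_ff a lam (n - k)
          * (deg_ff (of_nat m * of_nat i + 1) lam k * z ^ i / fact i))" for i
    unfolding deg_ff_binomial[of "of_nat m * of_nat i + 1" a] sum_distrib_right sum_divide_distrib
    by (simp add: algebra_simps)
  ultimately show ?thesis
    by simp
qed

theorem theorem3p1:
  fixes m n l :: nat and lam x :: real
  assumes "m \<ge> 1" and "lam \<noteq> 0"
  shows "deg_dowling m lam (n + l) x =
    (\<Sum>j\<le>l. \<Sum>k\<le>n. of_nat (n choose k) * deg_whitney2 m lam l j * x ^ j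
        * deg_ff (of_nat m * of_nat j - of_nat l * lam) lam (n - k)
        * deg_dowling m lam k x)"
proof -
  have m: "m \<noteq> 0" using assms(1) by simp
  define z where "z = x / of_nat m"
  have x: "x = of_nat m * z" using m by (simp add: z_def)
  let ?a = "\<lambda>j. of_nat m * of_nat j - of_nat l * lam"
  let ?R = "\<lambda>j. \<Sum>k\<le>n. of_nat (n choose k) * deg_ff (?a j) lam (n - k) * (exp z * deg_dowling m lam k x)"
  have shifted: "(\<lambda>i. deg_ff (of_nat m * of_nat (i + j) + 1 - of_nat l * lam) lam n * z ^ i / fact i)
      sums ?R j" for j
    using deg_dowling_dobinski_shift[OF m, of "?a j" lam n z] by (simp add: x algebra_simps)
  have "(\<lambda>i. \<Sum>j\<le>l. whitney_rec m lam l j * of_nat m ^ j * (falling_fact (of_nat i) j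
          * deg_ff (of_nat m * of_nat i + 1 - of_nat l * lam) lam n * z ^ i / fact i))
      sums (\<Sum>j\<le>l. whitney_rec m lam l j * of_nat m ^ j * (z ^ j * ?R j))"
    by (intro sums_sum sums_mult sums_falling_fact_mult shifted)
  then have expansion: "(\<lambda>i. deg_ff (of_nat m * of_nat i + 1) lam (n + l) * z ^ i / fact i)
      sums (\<Sum>j\<le>l. whitney_rec m lam l j * of_nat m ^ j * (z ^ j * ?R j))"
    unfolding deg_ff_add deg_ff_whitney_rec_expansion sum_distrib_right sum_divide_distrib
    by (simp add: algebra_simps)
  have "exp z * deg_dowling m lam (n + l) x
      = (\<Sum>j\<le>l. whitney_rec m lam l j * of_nat m ^ j * (z ^ j * ?R j))"
    using sums_unique2[OF deg_dowling_dobinski[OF m] expansion] by (simp only: x)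
  also have "\<dots> = exp z * (\<Sum>j\<le>l. \<Sum>k\<le>n. of_nat (n choose k) * deg_whitney2 m lam l j * x ^ j
        * deg_ff (?a j) lam (n - k) * deg_dowling m lam k x)"
    unfolding deg_whitney2_eq_whitney_rec[OF m] sum_distrib_left x power_mult_distrib
    by (intro sum.cong refl) (simp only: mult_ac)
  finally show ?thesis
    by (simp only: mult_left_cancel[OF exp_not_eq_zero])
qed

end
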